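(* Let $d>0$, let $J$ satisfy (J) and (J2), and let $f$ satisfy (f3); let $c_*>0$ be the minimal traveling wave speed described in the context. Fix $\sigma\in(0,1)$ and $c\in(0,c_* )$, and let $M$, $\tilde f$, $a$, $A$ and $\phi_*^\sigma$ be as in the context. Then the pointwise limit $\phi_\sigma(x):=\lim_{n\to\infty}A^n[\phi_*^\sigma](x)$ exists for every $x\in\mathbb{R}$, and $\phi=\phi_\sigma$ is a solution of $$d\int_{-\infty}^{+\infty}J(x-y)\phi(y)\,dy-d\phi(x)+c\phi'(x)+f(\phi(x))=0\ \ (-\infty<x<0),\qquad \phi(-\infty)=1,\quad \phi(x)=\sigma\ \ (0\le x<+\infty),$$ with $\phi_\sigma$ continuously differentiable on $(-\infty,0)$ and $0\le\phi_\sigma\le1$.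
   Context: Condition (J): $J\in C(\mathbb{R})\cap L^\infty(\mathbb{R})$, $J\ge 0$, $J(0)>0$, $\int_{\mathbb{R}}J=1$, $J$ even. Condition (J2): there exists $\lambda>0$ with $\int_{\mathbb{R}}J(x)e^{\lambda x}dx<\infty$. Condition (f3): $f\in C^1([0,\infty))$, $f(0)=f(1)=0$, $f>0$ in $(0,1)$, $f'(0)>0>f'(1)$, $f(u)/u$ nonincreasing in $u>0$. Known fact (minimal speed): under (J), (J2), (f3) there is $c_*>0$ such that the problem $d\int_{\mathbb{R}}J(x-y)\phi(y)dy-d\phi(x)+c\phi'(x)+f(\phi(x))=0$ on $\mathbb{R}$, $\phi(-\infty)=1$, $\phi(+\infty)=0$, has a nonincreasing solution $\phi\in L^\infty(\mathbb{R})$ if and only if $c\ge c_*$; such solutions are $C^1$. Construction: choose $M>0$ such that $\tilde f(u):=(cM-d)u+f(u)$ is increasing on $[0,1]$; let $a(x)=\int_{-\infty}^xJ(y)dy$. On $\Omega=\{\phi\in C(\mathbb{R}):0\le\phi\le1\}$ define $A[\phi](x)=\sigma$ for $x\ge0$ and, for $x<0$, $$A[\phi](x)=e^{Mx}\sigma+\frac{e^{Mx}}{c}\int_x^0e^{-M\xi}\Big[d\int_{-\infty}^0J(\xi-y)\phi(y)dy+d\sigma a(\xi)+\tilde f(\phi(\xi))\Big]d\xi.$$ Let $\phi_*$ be a nonincreasing traveling wave solution with speed $c_*$ (as in the known fact), translated so that $\phi_*(0)=\sigma$, and set $\phi_*^\sigma(x)=\max\{\phi_*(x),\sigma\}$ (so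 $\phi_*^\sigma=\phi_*$ on $(-\infty,0)$ and $=\sigma$ on $[0,\infty)$). *)

theory Defs
  imports "HOL-Analysis.Analysis"
begin

definition cond_J :: "(real \<Rightarrow> real) \<Rightarrow> bool" where
  "cond_J J \<longleftrightarrow> continuous_on UNIV J \<and> bounded (range J) \<and> (\<forall>x. J x \<ge> 0) \<and> J 0 > 0
     \<and> (J has_integral 1) UNIV \<and> (\<forall>x. J (-x) = J x)"

definition cond_J2 :: "(real \<Rightarrow> real) \<Rightarrow> bool" where
  "cond_J2 J \<longleftrightarrow> (\<exists>l>0. (\<lambda>x. J x * exp (l * x)) integrable_on UNIV)"

definition cond_f3 :: "(real \<Rightarrow> real) \<Rightarrow> bool" where
  "cond_f3 f \<longleftrightarrow> (\<exists>f'. continuous_on {0..} f'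
        \<and> (\<forall>u\<ge>0. (f has_real_derivative f' u) (at u within {0..}))
        \<and> f' 0 > 0 \<and> f' 1 < 0)
     \<and> f 0 = 0 \<and> f 1 = 0 \<and> (\<forall>u. 0 < u \<and> u < 1 \<longrightarrow> f u > 0)
     \<and> (\<forall>u v. 0 < u \<and> u \<le> v \<longrightarrow> f v / v \<le> f u / u)"

definition tw_solution ::
  "real \<Rightarrow> (real \<Rightarrow> real) \<Rightarrow> (real \<Rightarrow> real) \<Rightarrow> real \<Rightarrow> (real \<Rightarrow> real) \<Rightarrow> bool" where
  "tw_solution d J f c \<phi> \<longleftrightarrow> bounded (range \<phi>) \<and> antimono \<phi>
     \<and> (\<forall>x. \<phi> differentiable (at x)
          \<and> d * integral UNIV (\<lambda>y. J (x - y) * \<phi> y) - d * \<phi> x + c * deriv \<phi> x + f (\<phi> x) = 0)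
     \<and> (\<phi> \<longlongrightarrow> 1) at_bot \<and> (\<phi> \<longlongrightarrow> 0) at_top"

definition ftilde :: "real \<Rightarrow> real \<Rightarrow> real \<Rightarrow> (real \<Rightarrow> real) \<Rightarrow> real \<Rightarrow> real" where
  "ftilde c M d f u = (c * M - d) * u + f u"

definition aJ :: "(real \<Rightarrow> real) \<Rightarrow> real \<Rightarrow> real" where
  "aJ J x = integral {..x} J"

definition opA ::
  "real \<Rightarrow> (real \<Rightarrow> real) \<Rightarrow> (real \<Rightarrow> real) \<Rightarrow> real \<Rightarrow> real \<Rightarrow> real
     \<Rightarrow> (real \<Rightarrow> real) \<Rightarrow> real \<Rightarrow> real" where
  "opA d J f c M \<sigma> \<phi> x =
     (if x \<ge> 0 then \<sigma>
      else exp (M * x) * \<sigma> + exp (M * x) / c *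
        integral {x..0} (\<lambda>\<xi>. exp (- M * \<xi>) *
          (d * integral {..0} (\<lambda>y. J (\<xi> - y) * \<phi> y) + d * \<sigma> * aJ J \<xi>
           + ftilde c M d f (\<phi> \<xi>))))"

end

theory Submission
  imports Defs
begin

text \<open>
  On the profiles that are measurable, take values in [0,1] and equal \<sigma> on [0,\<infinity>), the
  operator A is order preserving (J \<ge> 0 and ftilde is increasing) and maps the class into
  itself. Because c < c_*, the truncated wave \<phi>_*^\<sigma> = max(\<phi>_*, \<sigma>) is a sub-solution,
  \<phi>_*^\<sigma> \<le> A[\<phi>_*^\<sigma>], so the iterates increase pointwise and converge to some
  \<phi>_\<sigma> \<ge> \<phi>_*^\<sigma>. Dominated convergence makes \<phi>_\<sigma> a fixed point of A; differentiating the
  variation-of-constants formula \<phi>_\<sigma> = A[\<phi>_\<sigma>] gives the equation on (-\<infinity>,0), and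
  \<phi>_* \<le> \<phi>_\<sigma> \<le> 1 gives \<phi>_\<sigma>(-\<infinity>) = 1.
\<close>

lemma borel_measurable_lebesgue_on_if_borel:
  "(g :: real \<Rightarrow> real) \<in> borel_measurable borel \<Longrightarrow> g \<in> borel_measurable (lebesgue_on S)"
  by (metis sets_lborel measurable_completion measurable_restrict_space1 measurable_cong_sets)

lemma has_integral_exp_weighted_derivative:
  fixes g g' :: "real \<Rightarrow> real"
  assumes g: "\<And>t. (g has_real_derivative g' t) (at t)" and ab: "a \<le> b"
  shows "((\<lambda>t. exp (- M * t) * (M * g t - g' t)) has_integral
           exp (- M * a) * g a - exp (- M * b) * g b) {a..b}"
proof -
  have "((\<lambda>t. - (exp (- M * t) * g t)) has_real_derivative exp (- M * t) * (M * g t - g' t)) (at t)"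
    for t
  proof -
    have "((\<lambda>t. exp (- M * t)) has_real_derivative - M * exp (- M * t)) (at t)"
      by (auto intro!: derivative_eq_intros)
    from DERIV_minus[OF DERIV_mult[OF this g]] show ?thesis
      by (simp add: algebra_simps)
  qed
  then have "((\<lambda>t. exp (- M * t) * (M * g t - g' t)) has_integral
           - (exp (- M * b) * g b) - - (exp (- M * a) * g a)) {a..b}"
    by (intro fundamental_theorem_of_calculus[OF ab])
       (simp add: has_real_derivative_iff_has_vector_derivative has_vector_derivative_at_within)
  then show ?thesis by simp
qed

lemma has_real_derivative_integral_lower_limit:
  fixes g :: "real \<Rightarrow> real"
  assumes g: "continuous_on {..<b} g" and int: "\<And>t. t < b \<Longrightarrow> g integrable_on {t..b}"
    and x: "x < b"
  shows "((\<lambda>t. integral {t..b} g) has_real_derivative - g x) (at x)"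
proof -
  define m where "m = (x + b) / 2"
  have xm: "x - 1 < x" "x < m" "m < b" using x by (auto simp: m_def)
  have "((\<lambda>t. integral {t..m} g) has_real_derivative - g x) (at x within {x - 1..m})"
    by (rule integral_has_real_derivative') (use g xm in \<open>auto intro: continuous_on_subset\<close>)
  moreover have "at x within {x - 1..m} = at x"
    by (rule at_within_interior) (use xm in simp)
  ultimately have "((\<lambda>t. integral {t..m} g + integral {m..b} g) has_real_derivative - g x) (at x)"
    by (auto intro!: derivative_eq_intros)
  then show ?thesis
  proof (rule has_field_derivative_transform_within_open[where S="{..<m}"])
    show "integral {t..m} g + integral {m..b} g = integral {t..b} g" if "t \<in> {..<m}" for t
      by (rule Henstock_Kurzweil_Integration.integral_combine) (use that xm int[of t] in auto)
  qed (use xm in auto)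
qed

lemma antimono_has_real_derivative_nonpos:
  assumes "antimono g" and g': "(g has_real_derivative D) (at x)"
  shows "D \<le> 0"
proof (rule ccontr)
  assume "\<not> D \<le> 0"
  then obtain \<delta> where \<delta>: "\<delta> > 0" "\<forall>h>0. h < \<delta> \<longrightarrow> g x < g (x + h)"
    using DERIV_pos_inc_right[OF g'] by force
  then have "g x < g (x + \<delta> / 2)" by auto
  moreover have "g (x + \<delta> / 2) \<le> g x" using \<open>antimono g\<close> \<delta>(1) by (auto simp: antimono_def)
  ultimately show False by simp
qed

lemma antimono_range_between_limits:
  fixes g :: "real \<Rightarrow> real"
  assumes "antimono g" and "(g \<longlongrightarrow> 1) at_bot" and "(g \<longlongrightarrow> 0) at_top"
  shows "0 \<le> g x \<and> g x \<le> 1"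
proof
  have "eventually (\<lambda>y. g x \<le> g y) at_bot"
    unfolding eventually_at_bot_linorder using assms(1) by (auto simp: antimono_def)
  then show "g x \<le> 1" by (rule tendsto_lowerbound[OF assms(2)]) simp
  have "eventually (\<lambda>y. g y \<le> g x) at_top"
    unfolding eventually_at_top_linorder using assms(1) by (auto simp: antimono_def)
  then show "0 \<le> g x" by (rule tendsto_upperbound[OF assms(3)]) simp
qed

section \<open>Convolution with a continuous probability density\<close>

locale prob_kernel =
  fixes J :: "real \<Rightarrow> real"
  assumes continuous_J: "continuous_on UNIV J"
    and J_nonneg: "\<And>x. J x \<ge> 0"
    and J_has_integral_1: "(J has_integral 1) UNIV"
begin

lemma borel_measurable_J [measurable]: "J \<in> borel_measurable borel"
  using continuous_J by (rule borel_measurable_continuous_onI)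

lemma integrable_J: "integrable lborel J"
  and integral_J: "integral\<^sup>L lborel J = 1"
proof -
  have nn: "integral\<^sup>N lborel J = 1"
    using nn_integral_has_integral_lborel[OF borel_measurable_J J_nonneg J_has_integral_1] by simp
  show i: "integrable lborel J"
    by (rule integrableI_nonneg) (auto simp: nn J_nonneg)
  show "integral\<^sup>L lborel J = 1"
    using has_integral_integral_lborel[OF i] J_has_integral_1 has_integral_unique by blast
qed

lemma integrable_J_reflect: "integrable lborel (\<lambda>y. J (\<xi> - y))"
  and integral_J_reflect: "(\<integral>y. J (\<xi> - y) \<partial>lborel) = 1"
proof -
  have "integrable lborel (\<lambda>y. J (\<xi> + (-1) * y))"
    by (rule lborel_integrable_real_affine[OF integrable_J]) simp
  then show "integrable lborel (\<lambda>y. J (\<xi> - y))" by simp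
  have "integral\<^sup>L lborel J = \<bar>-1\<bar> *\<^sub>R (\<integral>y. J (\<xi> + (-1) * y) \<partial>lborel)"
    by (rule lborel_integral_real_affine) simp
  then show "(\<integral>y. J (\<xi> - y) \<partial>lborel) = 1" using integral_J by simp
qed

text \<open>J*\<phi> as a Lebesgue integral, to have dominated convergence at hand.\<close>
definition convol :: "(real \<Rightarrow> real) \<Rightarrow> real \<Rightarrow> real" where
  "convol \<phi> \<xi> = (\<integral>y. J (\<xi> - y) * \<phi> y \<partial>lborel)"

lemma abs_J_mult_le: "\<bar>\<phi> y\<bar> \<le> B \<Longrightarrow> \<bar>J (\<xi> - y) * \<phi> y\<bar> \<le> B * J (\<xi> - y)"
  using mult_left_mono[of "\<bar>\<phi> y\<bar>" B "J (\<xi> - y)"] J_nonneg[of "\<xi> - y"]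
  by (simp add: abs_mult mult.commute)

lemma integrable_convol_integrand:
  assumes [measurable]: "\<phi> \<in> borel_measurable borel" and B: "\<And>y. \<bar>\<phi> y\<bar> \<le> B"
  shows "integrable lborel (\<lambda>y. J (\<xi> - y) * \<phi> y)"
proof (rule Bochner_Integration.integrable_bound)
  show "integrable lborel (\<lambda>y. B * J (\<xi> - y))"
    using integrable_J_reflect by simp
  have "B \<ge> 0" using B[of 0] by simp
  then show "AE y in lborel. norm (J (\<xi> - y) * \<phi> y) \<le> norm (B * J (\<xi> - y))"
    using abs_J_mult_le[where \<phi>=\<phi> and B=B, OF B] J_nonneg by (intro AE_I2) (simp add: abs_mult)
qed simp

lemma integral_UNIV_eq_convol:
  assumes "\<phi> \<in> borel_measurable borel" and "\<And>y. \<bar>\<phi> y\<bar> \<le> B"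
  shows "integral UNIV (\<lambda>y. J (\<xi> - y) * \<phi> y) = convol \<phi> \<xi>"
  unfolding convol_def by (rule integral_lborel[OF integrable_convol_integrand[OF assms]])

lemma convol_mono:
  assumes "\<phi> \<in> borel_measurable borel" "\<psi> \<in> borel_measurable borel"
    and "\<And>y. \<bar>\<phi> y\<bar> \<le> B" "\<And>y. \<bar>\<psi> y\<bar> \<le> B" and "\<And>y. \<phi> y \<le> \<psi> y"
  shows "convol \<phi> \<xi> \<le> convol \<psi> \<xi>"
  unfolding convol_def using assms J_nonneg
  by (intro integral_mono[OF integrable_convol_integrand integrable_convol_integrand])
     (auto intro: mult_left_mono)

lemma convol_const: "convol (\<lambda>y. k) \<xi> = k"
  unfolding convol_def using integral_J_reflect[of \<xi>] by simp

lemma convol_nonneg_le_1: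
  assumes "\<phi> \<in> borel_measurable borel" and "\<And>y. 0 \<le> \<phi> y \<and> \<phi> y \<le> 1"
  shows "0 \<le> convol \<phi> \<xi> \<and> convol \<phi> \<xi> \<le> 1"
  using convol_mono[of "\<lambda>y. 0" \<phi> 1 \<xi>] convol_mono[of \<phi> "\<lambda>y. 1" 1 \<xi>] assms
  by (simp add: convol_const abs_le_iff)

lemma convol_tendsto:
  assumes [measurable]: "\<And>n. \<phi>s n \<in> borel_measurable borel" "\<phi> \<in> borel_measurable borel"
    and B: "\<And>n y. \<bar>\<phi>s n y\<bar> \<le> B" and lim: "\<And>y. (\<lambda>n. \<phi>s n y) \<longlonglongrightarrow> \<phi> y"
  shows "(\<lambda>n. convol (\<phi>s n) \<xi>) \<longlonglongrightarrow> convol \<phi> \<xi>"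
  unfolding convol_def
proof (rule integral_dominated_convergence[where w="\<lambda>y. B * J (\<xi> - y)"])
  show "integrable lborel (\<lambda>y. B * J (\<xi> - y))" using integrable_J_reflect by simp
  show "AE y in lborel. (\<lambda>n. J (\<xi> - y) * \<phi>s n y) \<longlonglongrightarrow> J (\<xi> - y) * \<phi> y"
    by (intro AE_I2 tendsto_mult tendsto_const lim)
  show "AE y in lborel. norm (J (\<xi> - y) * \<phi>s n y) \<le> B * J (\<xi> - y)" for n
    using abs_J_mult_le[where \<phi>="\<phi>s n" and B=B, OF B] by (intro AE_I2) simp
qed auto

text \<open>Scheffe's argument: \<bar>p - q\<bar> = p + q - 2 min p q, and the integrals of the minima
  converge by dominated convergence.\<close>
lemma integral_abs_J_shift_tendsto_0:
  assumes xs: "xs \<longlonglongrightarrow> \<xi>"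
  shows "(\<lambda>n. \<integral>y. \<bar>J (xs n - y) - J (\<xi> - y)\<bar> \<partial>lborel) \<longlonglongrightarrow> 0"
proof -
  have isCont_J: "isCont J x" for x
    using continuous_J by (simp add: continuous_on_eq_continuous_at)
  have int_min: "integrable lborel (\<lambda>y. min (J (xs n - y)) (J (\<xi> - y)))" for n
    by (intro Bochner_Integration.integrable_bound[OF integrable_J_reflect[of \<xi>]] AE_I2)
       (auto simp: J_nonneg)
  have lim_min: "(\<lambda>n. \<integral>y. min (J (xs n - y)) (J (\<xi> - y)) \<partial>lborel) \<longlonglongrightarrow> 1"
    unfolding integral_J_reflect[of \<xi>, symmetric]
  proof (rule integral_dominated_convergence[where w="\<lambda>y. J (\<xi> - y)"])
    show "AE y in lborel. (\<lambda>n. min (J (xs n - y)) (J (\<xi> - y))) \<longlonglongrightarrow> J (\<xi> - y)"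
    proof (rule AE_I2)
      fix y
      have "(\<lambda>n. J (xs n - y)) \<longlonglongrightarrow> J (\<xi> - y)"
        by (rule isCont_tendsto_compose[OF isCont_J]) (intro tendsto_intros xs)
      then have "(\<lambda>n. min (J (xs n - y)) (J (\<xi> - y))) \<longlonglongrightarrow> min (J (\<xi> - y)) (J (\<xi> - y))"
        by (intro tendsto_min tendsto_const)
      then show "(\<lambda>n. min (J (xs n - y)) (J (\<xi> - y))) \<longlonglongrightarrow> J (\<xi> - y)" by simp
    qed
  qed (auto simp: J_nonneg integrable_J_reflect)
  have "(\<integral>y. \<bar>J (xs n - y) - J (\<xi> - y)\<bar> \<partial>lborel)
      = 2 - 2 * (\<integral>y. min (J (xs n - y)) (J (\<xi> - y)) \<partial>lborel)" for n
  proof -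
    have "(\<integral>y. \<bar>J (xs n - y) - J (\<xi> - y)\<bar> \<partial>lborel)
       = (\<integral>y. J (xs n - y) + J (\<xi> - y) - 2 * min (J (xs n - y)) (J (\<xi> - y)) \<partial>lborel)"
      by (rule Bochner_Integration.integral_cong) auto
    then show ?thesis
      using integrable_J_reflect int_min integral_J_reflect by simp
  qed
  moreover have "(\<lambda>n. 2 - 2 * (\<integral>y. min (J (xs n - y)) (J (\<xi> - y)) \<partial>lborel)) \<longlonglongrightarrow> 2 - 2 * 1"
    using lim_min by (intro tendsto_intros)
  ultimately show ?thesis by simp
qed

lemma continuous_on_convol:
  assumes [measurable]: "\<phi> \<in> borel_measurable borel" and B: "\<And>y. \<bar>\<phi> y\<bar> \<le> B"
  shows "continuous_on UNIV (convol \<phi>)"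
proof (rule continuous_at_imp_continuous_on, intro ballI)
  fix \<xi> :: real
  show "isCont (convol \<phi>) \<xi>"
    unfolding continuous_at_sequentially comp_def
  proof (intro allI impI)
    fix xs assume xs: "xs \<longlonglongrightarrow> \<xi>"
    have "\<forall>n. norm (convol \<phi> (xs n) - convol \<phi> \<xi>) \<le> B * (\<integral>y. \<bar>J (xs n - y) - J (\<xi> - y)\<bar> \<partial>lborel)"
    proof
      fix n
      have i1: "integrable lborel (\<lambda>y. J (xs n - y) * \<phi> y)"
        and i2: "integrable lborel (\<lambda>y. J (\<xi> - y) * \<phi> y)"
        using integrable_convol_integrand[OF assms] by auto
      have "convol \<phi> (xs n) - convol \<phi> \<xi> = (\<integral>y. (J (xs n - y) - J (\<xi> - y)) * \<phi> y \<partial>lborel)"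
        unfolding convol_def using i1 i2 by (simp add: left_diff_distrib)
      also have "norm \<dots> \<le> (\<integral>y. B * \<bar>J (xs n - y) - J (\<xi> - y)\<bar> \<partial>lborel)"
      proof (rule Bochner_Integration.integral_norm_bound_integral)
        show "integrable lborel (\<lambda>y. (J (xs n - y) - J (\<xi> - y)) * \<phi> y)"
          using i1 i2 by (simp add: left_diff_distrib)
        show "integrable lborel (\<lambda>y. B * \<bar>J (xs n - y) - J (\<xi> - y)\<bar>)"
          using integrable_J_reflect by (intro integrable_mult_right integrable_abs
              Bochner_Integration.integrable_diff)
        show "norm ((J (xs n - y) - J (\<xi> - y)) * \<phi> y) \<le> B * \<bar>J (xs n - y) - J (\<xi> - y)\<bar>"
          for y
          using mult_left_mono[OF B[of y] abs_ge_zero[of "J (xs n - y) - J (\<xi> - y)"]]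
          by (simp add: abs_mult mult.commute)
      qed
      finally show "norm (convol \<phi> (xs n) - convol \<phi> \<xi>)
          \<le> B * (\<integral>y. \<bar>J (xs n - y) - J (\<xi> - y)\<bar> \<partial>lborel)"
        by simp
    qed
    moreover have "(\<lambda>n. B * (\<integral>y. \<bar>J (xs n - y) - J (\<xi> - y)\<bar> \<partial>lborel)) \<longlonglongrightarrow> 0"
      using tendsto_mult_right_zero[OF integral_abs_J_shift_tendsto_0[OF xs]] by simp
    ultimately have "(\<lambda>n. convol \<phi> (xs n) - convol \<phi> \<xi>) \<longlonglongrightarrow> 0"
      by (rule Lim_null_comparison[OF always_eventually])
    then show "(\<lambda>n. convol \<phi> (xs n)) \<longlonglongrightarrow> convol \<phi> \<xi>" by (simp add: LIM_zero_iff)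
  qed
qed

lemma aJ_eq_convol_indicator: "s * aJ J \<xi> = (\<integral>y. J (\<xi> - y) * (s * indicator {0..} y) \<partial>lborel)"
proof -
  have int: "integrable lborel (\<lambda>t. indicator {..\<xi>} t * J t)"
    using integrable_real_mult_indicator[of "{..\<xi>}" lborel J] integrable_J
    by (simp add: mult.commute)
  have "aJ J \<xi> = integral UNIV (\<lambda>t. if t \<in> {..\<xi>} then J t else 0)"
    unfolding aJ_def by (rule integral_restrict_UNIV[symmetric])
  also have "\<dots> = integral UNIV (\<lambda>t. indicator {..\<xi>} t * J t)"
    by (rule arg_cong[where f="integral UNIV"]) (auto simp: indicator_def)
  also have "\<dots> = (\<integral>t. indicator {..\<xi>} t * J t \<partial>lborel)"
    by (rule integral_lborel[OF int])
  also have "\<dots> = \<bar>-1\<bar> *\<^sub>R (\<integral>y. indicator {..\<xi>} (\<xi> + (-1) * y) * J (\<xi> + (-1) * y) \<partial>lborel)"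
    by (rule lborel_integral_real_affine) simp
  also have "\<dots> = (\<integral>y. J (\<xi> - y) * indicator {0..} y \<partial>lborel)"
    by (simp add: indicator_def mult.commute)
  finally show ?thesis by (simp add: mult.left_commute)
qed

lemma convol_eq_integral_nonpos_plus_aJ:
  assumes [measurable]: "\<phi> \<in> borel_measurable borel" and B: "\<And>y. \<bar>\<phi> y\<bar> \<le> B"
    and s: "\<And>y. y \<ge> 0 \<Longrightarrow> \<phi> y = s"
  shows "convol \<phi> \<xi> = integral {..0} (\<lambda>y. J (\<xi> - y) * \<phi> y) + s * aJ J \<xi>"
proof -
  define \<phi>_neg where "\<phi>_neg y = (if y \<le> 0 then \<phi> y else 0)" for y
  have meas[measurable]: "\<phi>_neg \<in> borel_measurable borel" unfolding \<phi>_neg_def by measurable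
  have bound: "\<bar>\<phi>_neg y\<bar> \<le> B" for y using B[of y] B[of 0] unfolding \<phi>_neg_def by auto
  have "integral {..0} (\<lambda>y. J (\<xi> - y) * \<phi> y)
      = integral UNIV (\<lambda>y. if y \<in> {..0} then J (\<xi> - y) * \<phi> y else 0)"
    by (rule integral_restrict_UNIV[symmetric])
  also have "\<dots> = integral UNIV (\<lambda>y. J (\<xi> - y) * \<phi>_neg y)"
    by (rule arg_cong[where f="integral UNIV"]) (auto simp: \<phi>_neg_def)
  also have "\<dots> = convol \<phi>_neg \<xi>" by (rule integral_UNIV_eq_convol[OF meas bound])
  finally have neg: "integral {..0} (\<lambda>y. J (\<xi> - y) * \<phi> y) = convol \<phi>_neg \<xi>" .
  have pos: "s * aJ J \<xi> = (\<integral>y. J (\<xi> - y) * (s * indicator {0<..} y) \<partial>lborel)"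
    unfolding aJ_eq_convol_indicator
  proof (rule integral_cong_AE)
    show "AE y in lborel. J (\<xi> - y) * (s * indicator {0..} y) = J (\<xi> - y) * (s * indicator {0<..} y)"
      using AE_lborel_singleton[of 0] by eventually_elim (auto simp: indicator_def)
  qed auto
  have "\<bar>s\<bar> \<le> B" using B[of 0] s[of 0] by simp
  then have int_pos: "integrable lborel (\<lambda>y. J (\<xi> - y) * (s * indicator {0<..} y))"
    by (intro integrable_convol_integrand[where B=B]) (auto simp: indicator_def)
  have "convol \<phi> \<xi>
      = (\<integral>y. J (\<xi> - y) * \<phi>_neg y + J (\<xi> - y) * (s * indicator {0<..} y) \<partial>lborel)"
    unfolding convol_def
    by (rule Bochner_Integration.integral_cong) (auto simp: \<phi>_neg_def indicator_def s)
  also have "\<dots> = convol \<phi>_neg \<xi> + s * aJ J \<xi>"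
    unfolding pos convol_def using integrable_convol_integrand[OF meas bound] int_pos by simp
  finally show ?thesis unfolding neg .
qed

end

section \<open>Traveling wave profiles\<close>

lemma tw_solution_antimono: "tw_solution d J f c \<phi> \<Longrightarrow> x \<le> y \<Longrightarrow> \<phi> y \<le> \<phi> x"
  unfolding tw_solution_def antimono_def by blast

lemma tw_solution_has_real_derivative:
  "tw_solution d J f c \<phi> \<Longrightarrow> (\<phi> has_real_derivative deriv \<phi> x) (at x)"
  unfolding tw_solution_def using DERIV_deriv_iff_real_differentiable by blast

lemma tw_solution_continuous: "tw_solution d J f c \<phi> \<Longrightarrow> continuous_on UNIV \<phi>"
  by (metis DERIV_isCont continuous_at_imp_continuous_on tw_solution_has_real_derivative)

lemma tw_solution_range: "tw_solution d J f c \<phi> \<Longrightarrow> 0 \<le> \<phi> x \<and> \<phi> x \<le> 1"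
  unfolding tw_solution_def using antimono_range_between_limits by blast

lemma tw_solution_deriv_nonpos: "tw_solution d J f c \<phi> \<Longrightarrow> deriv \<phi> x \<le> 0"
  using antimono_has_real_derivative_nonpos tw_solution_has_real_derivative
  unfolding tw_solution_def by blast

lemma (in prob_kernel) tw_solution_convol_equation:
  assumes "tw_solution d J f c \<phi>"
  shows "d * convol \<phi> x - d * \<phi> x + c * deriv \<phi> x + f (\<phi> x) = 0"
proof -
  have "integral UNIV (\<lambda>y. J (x - y) * \<phi> y) = convol \<phi> x"
    using tw_solution_range[OF assms]
    by (intro integral_UNIV_eq_convol[where B=1] borel_measurable_continuous_onI
        tw_solution_continuous[OF assms]) (simp add: abs_le_iff)
  then show ?thesis using assms unfolding tw_solution_def by metis
qed

section \<open>The operator A\<close>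

locale opA_setting = prob_kernel J for J :: "real \<Rightarrow> real" +
  fixes f :: "real \<Rightarrow> real" and d c M \<sigma> :: real
  assumes d_pos: "d > 0" and c_pos: "c > 0" and \<sigma>: "0 < \<sigma>" "\<sigma> < 1"
    and continuous_f: "continuous_on {0..1} f" and f_0: "f 0 = 0" and f_1: "f 1 = 0"
    and mono_ft: "mono_on {0..1} (ftilde c M d f)"
begin

abbreviation "ft \<equiv> ftilde c M d f"
abbreviation "A \<equiv> opA d J f c M \<sigma>"

text \<open>f is only known to be continuous on [0,\<infinity>); clamping the argument gives a continuous
  function on all of \<real> that agrees with ftilde on [0,1].\<close>
definition ft_clamp :: "real \<Rightarrow> real" where
  "ft_clamp u = ft (max 0 (min 1 u))"

definition admissible :: "(real \<Rightarrow> real) \<Rightarrow> bool" where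
  "admissible \<phi> \<longleftrightarrow> \<phi> \<in> borel_measurable borel \<and> (\<forall>x. 0 \<le> \<phi> x \<and> \<phi> x \<le> 1) \<and> (\<forall>x\<ge>0. \<phi> x = \<sigma>)"

text \<open>Since \<phi> = \<sigma> on [0,\<infinity>), the term d \<integral>{..0} J(\<xi>-y)\<phi>(y)dy + d\<sigma>a(\<xi>) in the definition of A
  is just d (J*\<phi>)(\<xi>); see A_eq_integral.\<close>
definition A_integrand :: "(real \<Rightarrow> real) \<Rightarrow> real \<Rightarrow> real" where
  "A_integrand \<phi> \<xi> = exp (- M * \<xi>) * (d * convol \<phi> \<xi> + ft (\<phi> \<xi>))"

lemma continuous_ft_clamp: "continuous_on UNIV ft_clamp"
proof -
  have "continuous_on {0..1} ft"
    unfolding ftilde_def by (intro continuous_intros continuous_f)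
  then show ?thesis
    unfolding ft_clamp_def
    by (rule continuous_on_compose2[where f="\<lambda>u. max 0 (min 1 u)"]) (auto intro!: continuous_intros)
qed

lemma ft_range: "0 \<le> u \<Longrightarrow> u \<le> 1 \<Longrightarrow> 0 \<le> ft u \<and> ft u \<le> c * M - d"
  using mono_onD[OF mono_ft, of 0 u] mono_onD[OF mono_ft, of u 1]
  by (simp add: ftilde_def f_0 f_1)

lemma admissibleD:
  assumes "admissible \<phi>"
  shows "\<phi> \<in> borel_measurable borel" "0 \<le> \<phi> x" "\<phi> x \<le> 1" "\<bar>\<phi> x\<bar> \<le> 1" "0 \<le> y \<Longrightarrow> \<phi> y = \<sigma>"
    "ft (\<phi> x) = ft_clamp (\<phi> x)"
  using assms unfolding admissible_def ft_clamp_def by auto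

lemma A_eq_integral:
  assumes "admissible \<phi>"
  shows "A \<phi> x = (if 0 \<le> x then \<sigma>
                   else exp (M * x) * \<sigma> + exp (M * x) / c * integral {x..0} (A_integrand \<phi>))"
proof -
  have "d * integral {..0} (\<lambda>y. J (\<xi> - y) * \<phi> y) + d * \<sigma> * aJ J \<xi> = d * convol \<phi> \<xi>" for \<xi>
    using convol_eq_integral_nonpos_plus_aJ[OF admissibleD(1,4,5)[OF assms]]
    by (simp add: algebra_simps)
  then show ?thesis unfolding opA_def A_integrand_def by simp
qed

lemma borel_measurable_A_integrand:
  assumes "admissible \<phi>" shows "A_integrand \<phi> \<in> borel_measurable borel"
proof -
  have [measurable]: "\<phi> \<in> borel_measurable borel" using admissibleD(1)[OF assms] .
  have [measurable]: "convol \<phi> \<in> borel_measurable borel"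
    using continuous_on_convol[OF admissibleD(1,4)[OF assms]]
    by (rule borel_measurable_continuous_onI)
  have [measurable]: "ft_clamp \<in> borel_measurable borel"
    by (rule borel_measurable_continuous_onI[OF continuous_ft_clamp])
  have "A_integrand \<phi> = (\<lambda>\<xi>. exp (- M * \<xi>) * (d * convol \<phi> \<xi> + ft_clamp (\<phi> \<xi>)))"
    unfolding A_integrand_def using admissibleD(6)[OF assms] by simp
  then show ?thesis by simp
qed

lemma A_integrand_bounds:
  assumes "admissible \<phi>"
  shows "0 \<le> A_integrand \<phi> \<xi> \<and> A_integrand \<phi> \<xi> \<le> exp (- M * \<xi>) * (c * M)"
proof -
  have "0 \<le> convol \<phi> \<xi> \<and> convol \<phi> \<xi> \<le> 1"
    using admissibleD[OF assms] by (intro convol_nonneg_le_1) auto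
  then have "0 \<le> d * convol \<phi> \<xi>" "d * convol \<phi> \<xi> \<le> d"
    using d_pos by (simp_all add: mult_left_le)
  moreover have "0 \<le> ft (\<phi> \<xi>) \<and> ft (\<phi> \<xi>) \<le> c * M - d"
    using admissibleD(2,3)[OF assms] by (intro ft_range)
  ultimately have "0 \<le> d * convol \<phi> \<xi> + ft (\<phi> \<xi>) \<and> d * convol \<phi> \<xi> + ft (\<phi> \<xi>) \<le> c * M"
    by linarith
  then show ?thesis unfolding A_integrand_def by (simp add: mult_left_mono)
qed

lemma integrable_A_integrand:
  assumes "admissible \<phi>" shows "A_integrand \<phi> integrable_on {a..b}"
proof (rule measurable_bounded_by_integrable_imp_integrable)
  show "A_integrand \<phi> \<in> borel_measurable (lebesgue_on {a..b})"
    by (rule borel_measurable_lebesgue_on_if_borel[OF borel_measurable_A_integrand[OF assms]])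
  show "(\<lambda>\<xi>. exp (- M * \<xi>) * (c * M)) integrable_on {a..b}"
    by (intro integrable_continuous_interval continuous_intros)
  show "norm (A_integrand \<phi> x) \<le> exp (- M * x) * (c * M)" for x
    using A_integrand_bounds[OF assms, of x] by simp
qed auto

lemma integral_A_integrand_bounds:
  assumes "admissible \<phi>" "x \<le> 0"
  shows "0 \<le> integral {x..0} (A_integrand \<phi>)"
    and "integral {x..0} (A_integrand \<phi>) \<le> c * (exp (- M * x) - 1)"
proof -
  show "0 \<le> integral {x..0} (A_integrand \<phi>)"
    using A_integrand_bounds[OF assms(1)]
    by (intro Henstock_Kurzweil_Integration.integral_nonneg integrable_A_integrand assms(1)) auto
  have "((\<lambda>\<xi>. exp (- M * \<xi>) * (M * c - 0)) has_integral c * (exp (- M * x) - 1)) {x..0}"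
    using has_integral_exp_weighted_derivative[of "\<lambda>_. c" "\<lambda>_. 0" x 0 M] assms(2)
    by (simp add: algebra_simps)
  then show "integral {x..0} (A_integrand \<phi>) \<le> c * (exp (- M * x) - 1)"
    using A_integrand_bounds[OF assms(1)]
    by (intro has_integral_le[OF integrable_integral[OF integrable_A_integrand[OF assms(1)]]])
       (auto simp: mult.commute)
qed

lemma continuous_on_A:
  assumes "admissible \<phi>" shows "continuous_on {..<0} (A \<phi>)"
proof -
  have "continuous_on {..<0} (\<lambda>x. integral {x..0} (A_integrand \<phi>))"
  proof (rule continuous_at_imp_continuous_on, intro ballI)
    fix x0 :: real assume "x0 \<in> {..<0}"
    then have "x0 \<in> interior {x0 - 1..0}" by simp
    moreover have "continuous_on {x0 - 1..0} (\<lambda>x. integral {x..0} (A_integrand \<phi>))"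
      by (rule indefinite_integral_continuous_1'[OF integrable_A_integrand[OF assms]])
    ultimately show "isCont (\<lambda>x. integral {x..0} (A_integrand \<phi>)) x0"
      using continuous_on_interior by blast
  qed
  then have "continuous_on {..<0}
      (\<lambda>x. exp (M * x) * \<sigma> + exp (M * x) / c * integral {x..0} (A_integrand \<phi>))"
    using c_pos by (intro continuous_intros) auto
  then show ?thesis
    by (rule continuous_on_eq) (simp add: A_eq_integral[OF assms])
qed

lemma A_range:
  assumes "admissible \<phi>" shows "0 \<le> A \<phi> x \<and> A \<phi> x \<le> 1"
proof (cases "0 \<le> x")
  case True then show ?thesis using \<sigma> by (simp add: A_eq_integral[OF assms])
next
  case False
  then have I: "0 \<le> integral {x..0} (A_integrand \<phi>)"
    "integral {x..0} (A_integrand \<phi>) \<le> c * (exp (- M * x) - 1)"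
    using integral_A_integrand_bounds[OF assms] by auto
  have "exp (M * x) / c * integral {x..0} (A_integrand \<phi>)
      \<le> exp (M * x) / c * (c * (exp (- M * x) - 1))"
    using I(2) c_pos by (intro mult_left_mono) auto
  also have "\<dots> = 1 - exp (M * x)"
    using c_pos by (simp add: field_simps flip: exp_add)
  finally have "exp (M * x) / c * integral {x..0} (A_integrand \<phi>) \<le> 1 - exp (M * x)" .
  moreover have "0 \<le> exp (M * x) / c * integral {x..0} (A_integrand \<phi>)"
    using I(1) c_pos by simp
  moreover have "0 \<le> exp (M * x) * \<sigma>" "exp (M * x) * \<sigma> \<le> exp (M * x)"
    using \<sigma> by simp_all
  moreover have "A \<phi> x = exp (M * x) * \<sigma> + exp (M * x) / c * integral {x..0} (A_integrand \<phi>)"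
    using False by (simp add: A_eq_integral[OF assms])
  ultimately show ?thesis by linarith
qed

lemma admissible_A:
  assumes "admissible \<phi>" shows "admissible (A \<phi>)"
proof -
  have "(\<lambda>x. if x \<in> {0..} then \<sigma> else A \<phi> x) \<in> borel_measurable borel"
  proof (rule borel_measurable_continuous_on_if)
    have "- {0..} = {..<(0::real)}" by auto
    then show "continuous_on (- {0..}) (A \<phi>)" using continuous_on_A[OF assms] by simp
  qed auto
  moreover have "(\<lambda>x. if x \<in> {0..} then \<sigma> else A \<phi> x) = A \<phi>"
    by (auto simp: A_eq_integral[OF assms])
  ultimately show ?thesis
    unfolding admissible_def using A_range[OF assms] by (simp add: A_eq_integral[OF assms])
qed

lemma A_mono:
  assumes \<phi>: "admissible \<phi>" and \<psi>: "admissible \<psi>" and le: "\<And>y. \<phi> y \<le> \<psi> y"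
  shows "A \<phi> x \<le> A \<psi> x"
proof (cases "0 \<le> x")
  case False
  have "A_integrand \<phi> \<xi> \<le> A_integrand \<psi> \<xi>" for \<xi>
  proof -
    have "convol \<phi> \<xi> \<le> convol \<psi> \<xi>"
      using admissibleD(1)[OF \<phi>] admissibleD(1)[OF \<psi>] admissibleD(4)[OF \<phi>]
        admissibleD(4)[OF \<psi>] le by (rule convol_mono)
    moreover have "ft (\<phi> \<xi>) \<le> ft (\<psi> \<xi>)"
      using admissibleD(2,3)[OF \<phi>] admissibleD(2,3)[OF \<psi>] le by (intro mono_onD[OF mono_ft]) auto
    ultimately show ?thesis
      unfolding A_integrand_def using d_pos by (intro mult_left_mono add_mono) auto
  qed
  then have "integral {x..0} (A_integrand \<phi>) \<le> integral {x..0} (A_integrand \<psi>)"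
    by (intro integral_le integrable_A_integrand \<phi> \<psi>)
  then have "exp (M * x) / c * integral {x..0} (A_integrand \<phi>)
      \<le> exp (M * x) / c * integral {x..0} (A_integrand \<psi>)"
    using c_pos by (intro mult_left_mono) auto
  then show ?thesis
    using False by (simp add: A_eq_integral[OF \<phi>] A_eq_integral[OF \<psi>])
qed (simp add: A_eq_integral[OF \<phi>] A_eq_integral[OF \<psi>])

lemma A_tendsto:
  assumes \<phi>s: "\<And>n. admissible (\<phi>s n)" and \<phi>: "admissible \<phi>"
    and lim: "\<And>y. (\<lambda>n. \<phi>s n y) \<longlonglongrightarrow> \<phi> y"
  shows "(\<lambda>n. A (\<phi>s n) x) \<longlonglongrightarrow> A \<phi> x"
proof (cases "0 \<le> x")
  case False
  have "(\<lambda>n. A_integrand (\<phi>s n) \<xi>) \<longlonglongrightarrow> A_integrand \<phi> \<xi>" for \<xi>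
  proof -
    have "(\<lambda>n. convol (\<phi>s n) \<xi>) \<longlonglongrightarrow> convol \<phi> \<xi>"
      by (rule convol_tendsto[OF admissibleD(1)[OF \<phi>s] admissibleD(1)[OF \<phi>]
            admissibleD(4)[OF \<phi>s] lim])
    moreover have "(\<lambda>n. ft_clamp (\<phi>s n \<xi>)) \<longlonglongrightarrow> ft_clamp (\<phi> \<xi>)"
      using continuous_ft_clamp lim
      by (intro isCont_tendsto_compose[of _ ft_clamp]) (auto simp: continuous_on_eq_continuous_at)
    ultimately show ?thesis
      unfolding A_integrand_def admissibleD(6)[OF \<phi>s] admissibleD(6)[OF \<phi>]
      by (intro tendsto_intros)
  qed
  then have "(\<lambda>n. integral {x..0} (A_integrand (\<phi>s n))) \<longlonglongrightarrow> integral {x..0} (A_integrand \<phi>)"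
    using A_integrand_bounds[OF \<phi>s]
    by (intro dominated_convergence(2)[where h="\<lambda>\<xi>. exp (- M * \<xi>) * (c * M)"]
        integrable_A_integrand \<phi>s integrable_continuous_interval continuous_intros) auto
  then have "(\<lambda>n. exp (M * x) * \<sigma> + exp (M * x) / c * integral {x..0} (A_integrand (\<phi>s n)))
      \<longlonglongrightarrow> exp (M * x) * \<sigma> + exp (M * x) / c * integral {x..0} (A_integrand \<phi>)"
    by (intro tendsto_intros)
  then show ?thesis
    using False by (simp add: A_eq_integral[OF \<phi>s] A_eq_integral[OF \<phi>])
qed (simp add: A_eq_integral[OF \<phi>s] A_eq_integral[OF \<phi>])

lemma admissible_limit:
  assumes \<phi>s: "\<And>n. admissible (\<phi>s n)" and lim: "\<And>y. (\<lambda>n. \<phi>s n y) \<longlonglongrightarrow> \<phi> y"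
  shows "admissible \<phi>"
  unfolding admissible_def
proof (intro conjI allI impI)
  show "\<phi> \<in> borel_measurable borel"
    by (rule borel_measurable_LIMSEQ_real[OF lim admissibleD(1)[OF \<phi>s]])
  fix x :: real
  show "0 \<le> \<phi> x" by (rule LIMSEQ_le_const[OF lim]) (use admissibleD(2)[OF \<phi>s] in auto)
  show "\<phi> x \<le> 1" by (rule LIMSEQ_le_const2[OF lim]) (use admissibleD(3)[OF \<phi>s] in auto)
next
  fix x :: real assume "0 \<le> x"
  then have "(\<lambda>n. \<phi>s n x) = (\<lambda>n. \<sigma>)" using admissibleD(5)[OF \<phi>s] by auto
  then show "\<phi> x = \<sigma>" using lim[of x] by (metis LIMSEQ_unique tendsto_const)
qed

lemma A_iterates_tendsto_fixpoint:
  assumes \<psi>: "admissible \<psi>" and sub: "\<And>x. \<psi> x \<le> A \<psi> x"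
  obtains \<phi> where "\<And>x. (\<lambda>n. (A ^^ n) \<psi> x) \<longlonglongrightarrow> \<phi> x" "admissible \<phi>" "A \<phi> = \<phi>"
    "\<And>x. \<psi> x \<le> \<phi> x"
proof -
  have adm: "admissible ((A ^^ n) \<psi>)" for n
    by (induction n) (auto simp: \<psi> admissible_A)
  have "(A ^^ n) \<psi> x \<le> (A ^^ Suc n) \<psi> x" for n x
  proof (induction n arbitrary: x)
    case 0 then show ?case using sub by simp
  next
    case (Suc n) then show ?case
      using A_mono[OF adm adm Suc.IH] by simp
  qed
  then have inc: "incseq (\<lambda>n. (A ^^ n) \<psi> x)" for x by (intro incseq_SucI)
  have "bdd_above (range (\<lambda>n. (A ^^ n) \<psi> x))" for x
    using admissibleD(3)[OF adm] by (intro bdd_aboveI[where M=1]) auto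
  define \<phi> where "\<phi> x = (SUP n. (A ^^ n) \<psi> x)" for x
  have lim: "(\<lambda>n. (A ^^ n) \<psi> x) \<longlonglongrightarrow> \<phi> x" for x
    unfolding \<phi>_def by (rule LIMSEQ_incseq_SUP[OF \<open>bdd_above _\<close> inc])
  have adm_\<phi>: "admissible \<phi>" by (rule admissible_limit[OF adm lim])
  have "A \<phi> = \<phi>"
  proof
    fix x
    show "A \<phi> x = \<phi> x"
    proof (rule LIMSEQ_unique)
      show "(\<lambda>n. A ((A ^^ n) \<psi>) x) \<longlonglongrightarrow> A \<phi> x"
        by (rule A_tendsto[OF adm adm_\<phi> lim])
      show "(\<lambda>n. A ((A ^^ n) \<psi>) x) \<longlonglongrightarrow> \<phi> x"
        using LIMSEQ_Suc[OF lim[of x]] by simp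
    qed
  qed
  moreover have "\<psi> x \<le> \<phi> x" for x
    using incseq_le[OF inc lim, of 0] by simp
  ultimately show ?thesis using that lim adm_\<phi> by blast
qed

lemma A_has_real_derivative:
  assumes \<phi>: "admissible \<phi>" and cont: "continuous_on {..<0} (A_integrand \<phi>)" and x: "x < 0"
  shows "(A \<phi> has_real_derivative M * A \<phi> x - exp (M * x) * A_integrand \<phi> x / c) (at x)"
proof -
  have I: "((\<lambda>t. integral {t..0} (A_integrand \<phi>)) has_real_derivative - A_integrand \<phi> x) (at x)"
    by (intro has_real_derivative_integral_lower_limit cont integrable_A_integrand \<phi> x)
  have E: "((\<lambda>t. exp (M * t)) has_real_derivative M * exp (M * x)) (at x)"
    by (auto intro!: derivative_eq_intros)
  have "((\<lambda>t. exp (M * t) * \<sigma> + exp (M * t) / c * integral {t..0} (A_integrand \<phi>))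
      has_real_derivative M * exp (M * x) * \<sigma> + 0 * exp (M * x)
        + (M * exp (M * x) / c * integral {x..0} (A_integrand \<phi>)
           + - A_integrand \<phi> x * (exp (M * x) / c))) (at x)"
    by (intro DERIV_add DERIV_mult DERIV_cdivide E I DERIV_const)
  moreover have "M * exp (M * x) * \<sigma> + 0 * exp (M * x)
        + (M * exp (M * x) / c * integral {x..0} (A_integrand \<phi>)
           + - A_integrand \<phi> x * (exp (M * x) / c))
      = M * A \<phi> x - exp (M * x) * A_integrand \<phi> x / c"
    using x by (simp add: A_eq_integral[OF \<phi>] algebra_simps)
  ultimately have "((\<lambda>t. exp (M * t) * \<sigma> + exp (M * t) / c * integral {t..0} (A_integrand \<phi>))
      has_real_derivative M * A \<phi> x - exp (M * x) * A_integrand \<phi> x / c) (at x)"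
    by simp
  then show ?thesis
    by (rule has_field_derivative_transform_within_open[where S="{..<0}"])
       (use x in \<open>auto simp: A_eq_integral[OF \<phi>]\<close>)
qed

text \<open>Differentiating \<phi> = A[\<phi>] gives \<phi>' = M \<phi> - (d J*\<phi> + ftilde \<phi>) / c, which is the wave
  equation because ftilde u = (c M - d) u + f u.\<close>
lemma fixpoint_A_solves_equation:
  assumes \<phi>: "admissible \<phi>" and fixed: "A \<phi> = \<phi>"
  shows "\<exists>\<phi>'. continuous_on {..<0} \<phi>'
          \<and> (\<forall>x<0. (\<phi> has_real_derivative \<phi>' x) (at x)
               \<and> d * integral UNIV (\<lambda>y. J (x - y) * \<phi> y) - d * \<phi> x + c * \<phi>' x + f (\<phi> x) = 0)"
proof (intro exI conjI allI impI)
  define \<phi>' where "\<phi>' x = M * \<phi> x - (d * convol \<phi> x + ft_clamp (\<phi> x)) / c" for x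
  have cont_\<phi>: "continuous_on {..<0} \<phi>"
    using continuous_on_A[OF \<phi>] fixed by simp
  have cont_convol: "continuous_on {..<0} (convol \<phi>)"
    using continuous_on_convol[OF admissibleD(1,4)[OF \<phi>]] by (rule continuous_on_subset) simp
  have cont_ft: "continuous_on {..<0} (\<lambda>x. ft_clamp (\<phi> x))"
    by (rule continuous_on_compose2[OF continuous_ft_clamp cont_\<phi>]) simp
  show "continuous_on {..<0} \<phi>'"
    unfolding \<phi>'_def using cont_\<phi> cont_convol cont_ft c_pos by (intro continuous_intros) auto
  have "continuous_on {..<0} (A_integrand \<phi>)"
    unfolding A_integrand_def admissibleD(6)[OF \<phi>]
    using cont_convol cont_ft by (intro continuous_intros)
  fix x :: real assume x: "x < 0"
  have "exp (M * x) * A_integrand \<phi> x = d * convol \<phi> x + ft_clamp (\<phi> x)"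
    unfolding A_integrand_def admissibleD(6)[OF \<phi>] by (simp add: exp_minus field_simps)
  then show "(\<phi> has_real_derivative \<phi>' x) (at x)"
    using A_has_real_derivative[OF \<phi> \<open>continuous_on {..<0} (A_integrand \<phi>)\<close> x]
    by (simp add: fixed \<phi>'_def)
  show "d * integral UNIV (\<lambda>y. J (x - y) * \<phi> y) - d * \<phi> x + c * \<phi>' x + f (\<phi> x) = 0"
    using c_pos integral_UNIV_eq_convol[OF admissibleD(1,4)[OF \<phi>]]
    by (simp add: \<phi>'_def admissibleD(6)[OF \<phi>, symmetric] ftilde_def field_simps)
qed

section \<open>The truncated traveling wave as a sub-solution\<close>

lemma tw_solution_max_admissible:
  assumes tw: "tw_solution d J f cs \<phi>" and \<phi>0: "\<phi> 0 = \<sigma>"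
  shows "admissible (\<lambda>y. max (\<phi> y) \<sigma>)"
proof -
  have "\<phi> y \<le> \<sigma>" if "0 \<le> y" for y
    using tw_solution_antimono[OF tw that] \<phi>0 by simp
  moreover have "\<phi> \<in> borel_measurable borel"
    by (rule borel_measurable_continuous_onI[OF tw_solution_continuous[OF tw]])
  ultimately show ?thesis
    unfolding admissible_def using tw_solution_range[OF tw] \<sigma> by (auto simp: max_def)
qed

text \<open>Speed cs \<ge> c and \<phi>' \<le> 0 give cs \<phi>' \<le> c \<phi>' in the wave equation, and J \<ge> 0 gives
  J*\<phi> \<le> J*max(\<phi>, \<sigma>).\<close>
lemma tw_solution_below_A_integrand:
  assumes tw: "tw_solution d J f cs \<phi>" and \<phi>0: "\<phi> 0 = \<sigma>" and cs: "c \<le> cs" and \<xi>: "\<xi> \<le> 0"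
  shows "c * (exp (- M * \<xi>) * (M * \<phi> \<xi> - deriv \<phi> \<xi>)) \<le> A_integrand (\<lambda>y. max (\<phi> y) \<sigma>) \<xi>"
proof -
  have "\<sigma> \<le> \<phi> \<xi>" using tw_solution_antimono[OF tw \<xi>] \<phi>0 by simp
  then have at_\<xi>: "max (\<phi> \<xi>) \<sigma> = \<phi> \<xi>" by simp
  have "convol \<phi> \<xi> \<le> convol (\<lambda>y. max (\<phi> y) \<sigma>) \<xi>"
    using tw_solution_range[OF tw] admissibleD[OF tw_solution_max_admissible[OF tw \<phi>0]]
      borel_measurable_continuous_onI[OF tw_solution_continuous[OF tw]]
    by (intro convol_mono[where B=1]) (auto simp: abs_le_iff)
  then have "d * convol \<phi> \<xi> \<le> d * convol (\<lambda>y. max (\<phi> y) \<sigma>) \<xi>"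
    using d_pos by simp
  moreover have "cs * deriv \<phi> \<xi> \<le> c * deriv \<phi> \<xi>"
    using cs tw_solution_deriv_nonpos[OF tw] by (simp add: mult_right_mono_neg)
  moreover have "ft (\<phi> \<xi>) = c * M * \<phi> \<xi> - d * \<phi> \<xi> + f (\<phi> \<xi>)"
    by (simp add: ftilde_def algebra_simps)
  moreover have "c * (M * \<phi> \<xi> - deriv \<phi> \<xi>) = c * M * \<phi> \<xi> - c * deriv \<phi> \<xi>"
    by (simp add: algebra_simps)
  ultimately have "c * (M * \<phi> \<xi> - deriv \<phi> \<xi>) \<le> d * convol (\<lambda>y. max (\<phi> y) \<sigma>) \<xi> + ft (\<phi> \<xi>)"
    using tw_solution_convol_equation[OF tw, of \<xi>] by linarith
  then show ?thesis
    unfolding A_integrand_def at_\<xi> by (simp add: mult.left_commute[of c] mult_left_mono)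
qed

lemma tw_solution_max_sub_solution:
  assumes tw: "tw_solution d J f cs \<phi>" and \<phi>0: "\<phi> 0 = \<sigma>" and cs: "c \<le> cs"
  shows "max (\<phi> x) \<sigma> \<le> A (\<lambda>y. max (\<phi> y) \<sigma>) x"
proof (cases "0 \<le> x")
  case True
  then show ?thesis
    using tw_solution_max_admissible[OF tw \<phi>0] tw_solution_antimono[OF tw True] \<phi>0
    by (simp add: A_eq_integral)
next
  case False
  let ?\<psi> = "\<lambda>y. max (\<phi> y) \<sigma>"
  have adm: "admissible ?\<psi>" by (rule tw_solution_max_admissible[OF tw \<phi>0])
  have "((\<lambda>\<xi>. c * (exp (- M * \<xi>) * (M * \<phi> \<xi> - deriv \<phi> \<xi>))) has_integral
      c * (exp (- M * x) * \<phi> x - \<sigma>)) {x..0}"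
    using has_integral_exp_weighted_derivative[OF tw_solution_has_real_derivative[OF tw], of x 0 M]
      False \<phi>0 by (intro has_integral_mult_right) simp
  then have "c * (exp (- M * x) * \<phi> x - \<sigma>) \<le> integral {x..0} (A_integrand ?\<psi>)"
    using tw_solution_below_A_integrand[OF tw \<phi>0 cs]
    by (intro has_integral_le[OF _ integrable_integral[OF integrable_A_integrand[OF adm]]]) auto
  then have "exp (M * x) / c * (c * (exp (- M * x) * \<phi> x - \<sigma>))
      \<le> exp (M * x) / c * integral {x..0} (A_integrand ?\<psi>)"
    using c_pos by (intro mult_left_mono) auto
  moreover have "exp (M * x) / c * (c * (exp (- M * x) * \<phi> x - \<sigma>)) = \<phi> x - exp (M * x) * \<sigma>"
    using c_pos by (simp add: field_simps flip: exp_add)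
  moreover have "\<sigma> \<le> \<phi> x"
    using tw_solution_antimono[OF tw, of x 0] False \<phi>0 by simp
  ultimately show ?thesis
    using False by (simp add: A_eq_integral[OF adm])
qed

end

lemma opA_setting_if_conditions:
  assumes "d > 0" "cond_J J" "cond_f3 f" "c > 0" "0 < \<sigma>" "\<sigma> < 1" "mono_on {0..1} (ftilde c M d f)"
  shows "opA_setting J f d c M \<sigma>"
proof -
  obtain f' where "\<And>u. u \<ge> 0 \<Longrightarrow> (f has_real_derivative f' u) (at u within {0..})"
    using assms(3) unfolding cond_f3_def by auto
  then have "continuous_on {0..} f"
    unfolding continuous_on_eq_continuous_within by (auto intro: DERIV_continuous)
  then have "continuous_on {0..1} f"
    by (rule continuous_on_subset) auto
  then show ?thesis
    using assms unfolding opA_setting_def opA_setting_axioms_def prob_kernel_def cond_J_def cond_f3_def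
    by auto
qed

theorem lemma2p1:
  fixes d c cstar \<sigma> M :: real and J f \<phi>star :: "real \<Rightarrow> real"
  assumes d: "d > 0"
    and J: "cond_J J" and J2: "cond_J2 J" and f3: "cond_f3 f"
    and cstar_pos: "cstar > 0"
    and cstar_min: "\<forall>c'. (\<exists>\<phi>. tw_solution d J f c' \<phi>) \<longleftrightarrow> c' \<ge> cstar"
    and sigma: "0 < \<sigma>" "\<sigma> < 1"
    and c: "0 < c" "c < cstar"
    and M: "M > 0" "mono_on {0..1} (ftilde c M d f)"
    and phistar: "tw_solution d J f cstar \<phi>star" "\<phi>star 0 = \<sigma>"
  shows "\<exists>\<phi>\<sigma>. (\<forall>x. (\<lambda>n. (opA d J f c M \<sigma> ^^ n) (\<lambda>y. max (\<phi>star y) \<sigma>) x) \<longlonglongrightarrow> \<phi>\<sigma> x)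
     \<and> (\<exists>\<phi>'. continuous_on {..<0} \<phi>'
          \<and> (\<forall>x<0. (\<phi>\<sigma> has_real_derivative \<phi>' x) (at x)
               \<and> d * integral UNIV (\<lambda>y. J (x - y) * \<phi>\<sigma> y) - d * \<phi>\<sigma> x + c * \<phi>' x
                   + f (\<phi>\<sigma> x) = 0))
     \<and> (\<phi>\<sigma> \<longlongrightarrow> 1) at_bot
     \<and> (\<forall>x\<ge>0. \<phi>\<sigma> x = \<sigma>)
     \<and> (\<forall>x. 0 \<le> \<phi>\<sigma> x \<and> \<phi>\<sigma> x \<le> 1)"
proof -
  interpret opA_setting J f d c M \<sigma>
    using opA_setting_if_conditions d J f3 c(1) sigma M(2) by blast
  have sub: "max (\<phi>star x) \<sigma> \<le> A (\<lambda>y. max (\<phi>star y) \<sigma>) x" for x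
    using tw_solution_max_sub_solution[OF phistar] c(2) by simp
  obtain \<phi>\<sigma> where lim: "\<And>x. (\<lambda>n. (A ^^ n) (\<lambda>y. max (\<phi>star y) \<sigma>) x) \<longlonglongrightarrow> \<phi>\<sigma> x"
    and adm: "admissible \<phi>\<sigma>" and fixed: "A \<phi>\<sigma> = \<phi>\<sigma>" and above: "\<And>x. max (\<phi>star x) \<sigma> \<le> \<phi>\<sigma> x"
    using A_iterates_tendsto_fixpoint[OF tw_solution_max_admissible[OF phistar] sub] by blast
  have "(\<phi>\<sigma> \<longlongrightarrow> 1) at_bot"
  proof (rule tendsto_sandwich[OF _ _ _ tendsto_const])
    show "(\<phi>star \<longlongrightarrow> 1) at_bot" using phistar(1) unfolding tw_solution_def by blast
    show "eventually (\<lambda>y. \<phi>star y \<le> \<phi>\<sigma> y) at_bot"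
      using above by (intro always_eventually) (metis max.bounded_iff)
    show "eventually (\<lambda>y. \<phi>\<sigma> y \<le> 1) at_bot"
      using admissibleD(3)[OF adm] by simp
  qed
  then show ?thesis
    using lim fixpoint_A_solves_equation[OF adm fixed] admissibleD(2,3,5)[OF adm] by blast
qed

end
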